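(* Let $n\in\mathbb{Z}$. The standard holomorphic structure $\overline{\nabla}=\overline{\nabla}_{(n)}$ on $\mathcal{L}_n$ is a bimodule connection with associated bimodule isomorphism $\Phi_{(n)}$; that is, for all $\eta\in\mathcal{L}_n$ and $f\in\mathcal{A}(\mathbb{CP}^1_q)$, $$\overline{\nabla}(\eta f)=\overline{\nabla}(\eta)\,f+\Phi_{(n)}(\eta\otimes\bar\partial f).$$
   Context: Fix $0<q<1$. Let $\mathcal{A}(SU_q(2))$ be the unital complex $*$-algebra generated by $a,c$ subject to $ac=qca$, $ac^*=qc^*a$, $cc^*=c^*c$, $a^*a+c^*c=aa^*+q^2cc^*=1$. Let $U_q(su(2))$ be the Hopf algebra generated by $K,K^{-1},E,F$ with $KK^{-1}=K^{-1}K=1$, $KE=qEK$, $KF=q^{-1}FK$, $EF-FE=(K^2-K^{-2})/(q-q^{-1})$, coproduct $\Delta K=K\otimes K$, $\Delta E=E\otimes K+K^{-1}\otimes E$, $\Delta F=F\otimes K+K^{-1}\otimes F$, counit $\epsilon(K)=1$, $\epsilon(E)=\epsilon(F)=0$. It acts on $\mathcal{A}(SU_q(2))$ from the left making it a left module algebra, with $K\triangleright a=q^{-1/2}a$, $K\triangleright c=q^{-1/2}c$, $K\triangleright a^*=q^{1/2}a^*$, $K\triangleright c^*=q^{1/2}c^*$, $E\triangleright a=-qc^*$, $E\triangleright c=a^*$, $E\triangleright a^*=E\triangleright c^*=0$, $F\triangleright a=F\triangleright c=0$, $F\triangleright a^*=c$, $F\triangleright c^*=-q^{-1}a$. Put $X_-=q^{-1/2}FK$.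 For $n\in\mathbb{Z}$ let $\mathcal{L}_n=\{x:K\triangleright x=q^{n/2}x\}$ and $\mathcal{A}(\mathbb{CP}^1_q):=\mathcal{L}_0$ (write $\mathcal{B}$ for it); each $\mathcal{L}_n$ is a $\mathcal{B}$-bimodule and $X_-\triangleright\mathcal{L}_n\subseteq\mathcal{L}_{n-2}$. Let $\Omega^1(SU_q(2))$ be the $\mathcal{A}(SU_q(2))$-bimodule which is free as a left module with basis $\omega_+,\omega_-,\omega_z$, with right multiplication determined by $\omega_\pm x=q^kx\omega_\pm$, $\omega_zx=q^{2k}x\omega_z$ for $x\in\mathcal{L}_k$. Put $\Omega^{(0,1)}(\mathbb{CP}^1_q):=\mathcal{L}_{-2}\omega_-$ and $\bar\partial f:=(X_-\triangleright f)\omega_-$ for $f\in\mathcal{B}$. The multiplication maps $\mu_1:\mathcal{L}_n\otimes_{\mathcal{B}}\Omega^{(0,1)}(\mathbb{CP}^1_q)\to\mathcal{L}_{n-2}\omega_-$ and $\mu_2:\Omega^{(0,1)}(\mathbb{CP}^1_q)\otimes_{\mathcal{B}}\mathcal{L}_n\to\mathcal{L}_{n-2}\omega_-$ (products taken in $\Omega^1(SU_q(2))$) are $\mathcal{B}$-bimodule isomorphisms; set $\Phi_{(n)}:=\mu_2^{-1}\circ\mu_1$. The standard holomorphic structure on $\mathcal{L}_n$ is $\overline{\nabla}_{(n)}:\mathcal{L}_n\to\Omega^{(0,1)}(\mathbb{CP}^1_q)\otimes_{\mathcal{B}}\mathcal{L}_n$, $\overline{\nabla}_{(n)}(\phi):=\mu_2^{-1}\big((X_-\triangleright\phi)\,\omega_-\big)$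 (equivalently $q^{-n+2}\omega_-(X_-\triangleright\phi)$); it satisfies the left Leibniz rule $\overline{\nabla}(f\phi)=f\overline{\nabla}(\phi)+\bar\partial f\otimes\phi$. Right multiplication by $f\in\mathcal{B}$ on $\Omega^{(0,1)}\otimes_{\mathcal{B}}\mathcal{L}_n$ acts on the $\mathcal{L}_n$ factor. *)

theory Defs
  imports "HOL-Analysis.Analysis"
begin

definition complex_alg :: "(complex \<Rightarrow> 'a::ring_1) \<Rightarrow> bool" where
  "complex_alg emb \<longleftrightarrow> emb 1 = 1 \<and>
     (\<forall>x y. emb (x + y) = emb x + emb y) \<and> (\<forall>x y. emb (x * y) = emb x * emb y) \<and>
     (\<forall>z x. emb z * x = x * emb z)"

definition clin :: "(complex \<Rightarrow> 'a::ring_1) \<Rightarrow> ('a \<Rightarrow> 'a) \<Rightarrow> bool" where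
  "clin emb T \<longleftrightarrow> (\<forall>x y. T (x + y) = T x + T y) \<and> (\<forall>z x. T (emb z * x) = emb z * T x)"

inductive_set gen_alg :: "(complex \<Rightarrow> 'a::ring_1) \<Rightarrow> 'a set \<Rightarrow> 'a set"
  for emb G where
  scal: "emb z \<in> gen_alg emb G"
| gen: "x \<in> G \<Longrightarrow> x \<in> gen_alg emb G"
| add: "x \<in> gen_alg emb G \<Longrightarrow> y \<in> gen_alg emb G \<Longrightarrow> x + y \<in> gen_alg emb G"
| mult: "x \<in> gen_alg emb G \<Longrightarrow> y \<in> gen_alg emb G \<Longrightarrow> x * y \<in> gen_alg emb G"

abbreviation cq :: "real \<Rightarrow> complex" where "cq r \<equiv> complex_of_real r"

text \<open>kK, kKi, kE, kF are the actions of the generators K, K^{-1}, E, F;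
  st is the star operation.\<close>

definition SUq2_setting ::
  "real \<Rightarrow> (complex \<Rightarrow> 'a::ring_1) \<Rightarrow> ('a \<Rightarrow> 'a) \<Rightarrow> 'a \<Rightarrow> 'a \<Rightarrow>
   ('a \<Rightarrow> 'a) \<Rightarrow> ('a \<Rightarrow> 'a) \<Rightarrow> ('a \<Rightarrow> 'a) \<Rightarrow> ('a \<Rightarrow> 'a) \<Rightarrow> bool" where
  "SUq2_setting q emb st a c kK kKi kE kF \<longleftrightarrow>
     0 < q \<and> q < 1 \<and> complex_alg emb \<and>
     \<comment> \<open>star structure\<close>
     (\<forall>x y. st (x + y) = st x + st y) \<and> (\<forall>x y. st (x * y) = st y * st x) \<and>
     (\<forall>z x. st (emb z * x) = emb (cnj z) * st x) \<and> (\<forall>x. st (st x) = x) \<and>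
     \<comment> \<open>defining relations of A(SU_q(2))\<close>
     a * c = emb (cq q) * c * a \<and> a * st c = emb (cq q) * st c * a \<and> c * st c = st c * c \<and>
     st a * a + st c * c = 1 \<and> a * st a + emb (cq (q^2)) * c * st c = 1 \<and>
     \<comment> \<open>generated by a, c (as a *-algebra)\<close>
     (\<forall>x. x \<in> gen_alg emb {a, c, st a, st c}) \<and>
     \<comment> \<open>the generators of U_q(su(2)) act by linear maps satisfying the relations\<close>
     clin emb kK \<and> clin emb kKi \<and> clin emb kE \<and> clin emb kF \<and>
     (\<forall>x. kK (kKi x) = x) \<and> (\<forall>x. kKi (kK x) = x) \<and>
     (\<forall>x. kK (kE x) = emb (cq q) * kE (kK x)) \<and>
     (\<forall>x. kK (kF x) = emb (cq (1/q)) * kF (kK x)) \<and>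
     (\<forall>x. kE (kF x) - kF (kE x) = emb (cq (1 / (q - 1/q))) * (kK (kK x) - kKi (kKi x))) \<and>
     \<comment> \<open>module algebra w.r.t. the coproduct and counit\<close>
     (\<forall>x y. kK (x * y) = kK x * kK y) \<and> kK 1 = 1 \<and>
     (\<forall>x y. kKi (x * y) = kKi x * kKi y) \<and> kKi 1 = 1 \<and>
     (\<forall>x y. kE (x * y) = kE x * kK y + kKi x * kE y) \<and> kE 1 = 0 \<and>
     (\<forall>x y. kF (x * y) = kF x * kK y + kKi x * kF y) \<and> kF 1 = 0 \<and>
     \<comment> \<open>action on the generators\<close>
     kK a = emb (cq (q powr (-1/2))) * a \<and> kK c = emb (cq (q powr (-1/2))) * c \<and>
     kK (st a) = emb (cq (q powr (1/2))) * st a \<and> kK (st c) = emb (cq (q powr (1/2))) * st c \<and>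
     kE a = - (emb (cq q) * st c) \<and> kE c = st a \<and> kE (st a) = 0 \<and> kE (st c) = 0 \<and>
     kF a = 0 \<and> kF c = 0 \<and> kF (st a) = c \<and> kF (st c) = - (emb (cq (1/q)) * a)"

definition Lsp :: "real \<Rightarrow> (complex \<Rightarrow> 'a::ring_1) \<Rightarrow> ('a \<Rightarrow> 'a) \<Rightarrow> int \<Rightarrow> 'a set" where
  "Lsp q emb kK n = {x. kK x = emb (cq (q powr (real_of_int n / 2))) * x}"

definition Xminus :: "real \<Rightarrow> (complex \<Rightarrow> 'a::ring_1) \<Rightarrow> ('a \<Rightarrow> 'a) \<Rightarrow> ('a \<Rightarrow> 'a) \<Rightarrow> 'a \<Rightarrow> 'a" where
  "Xminus q emb kK kF x = emb (cq (q powr (-1/2))) * kF (kK x)"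

text \<open>An element (yp, ym, yz) stands for yp omega_+ + ym omega_- + yz omega_z
  (free left module with basis omega_+, omega_-, omega_z).\<close>

type_synonym 'a omega1 = "'a \<times> 'a \<times> 'a"

definition om_lmul :: "'a::ring_1 \<Rightarrow> 'a omega1 \<Rightarrow> 'a omega1" where
  "om_lmul x w = (x * fst w, x * fst (snd w), x * snd (snd w))"

text \<open>right multiplication by a homogeneous element x of L_k:
  omega_pm x = q^k x omega_pm, omega_z x = q^(2k) x omega_z\<close>
definition om_rmul :: "real \<Rightarrow> (complex \<Rightarrow> 'a::ring_1) \<Rightarrow> ('a \<Rightarrow> 'a) \<Rightarrow> 'a omega1 \<Rightarrow> 'a \<Rightarrow> 'a omega1" where
  "om_rmul q emb kK w x =
     (let k = (SOME k. x \<in> Lsp q emb kK k) in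
       (emb (cq (q powr real_of_int k)) * fst w * x,
        emb (cq (q powr real_of_int k)) * fst (snd w) * x,
        emb (cq (q powr real_of_int (2 * k))) * snd (snd w) * x))"

definition omega_minus :: "'a::ring_1 omega1" where
  "omega_minus = (0, 1, 0)"

definition Om01 :: "real \<Rightarrow> (complex \<Rightarrow> 'a::ring_1) \<Rightarrow> ('a \<Rightarrow> 'a) \<Rightarrow> 'a omega1 set" where
  "Om01 q emb kK = (\<lambda>x. om_lmul x omega_minus) ` Lsp q emb kK (-2)"

definition dbar :: "real \<Rightarrow> (complex \<Rightarrow> 'a::ring_1) \<Rightarrow> ('a \<Rightarrow> 'a) \<Rightarrow> ('a \<Rightarrow> 'a) \<Rightarrow> 'a \<Rightarrow> 'a omega1" where
  "dbar q emb kK kF f = om_lmul (Xminus q emb kK kF f) omega_minus"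

text \<open>M (with right B-action ract) and N (with left B-action lact) are additive subgroups
  of abelian groups; M \<otimes>_B N is the free abelian group on M \<times> N modulo the subgroup
  generated by biadditivity and B-balancing relations (over B \<supseteq> \<complex>, this is the
  usual \<complex>-linear balanced tensor product). Elements are equivalence classes of
  finitely supported integer-valued functions on M \<times> N.\<close>

definition fsums :: "'m set \<Rightarrow> 'n set \<Rightarrow> ('m \<times> 'n \<Rightarrow> int) set" where
  "fsums M N = {u. finite {p. u p \<noteq> 0} \<and> {p. u p \<noteq> 0} \<subseteq> M \<times> N}"

definition dl :: "'m \<Rightarrow> 'n \<Rightarrow> ('m \<times> 'n \<Rightarrow> int)" where
  "dl m n = (\<lambda>p. if p = (m, n) then 1 else 0)"

inductive_set trel :: "'m::ab_group_add set \<Rightarrow> ('m \<Rightarrow> 'b \<Rightarrow> 'm) \<Rightarrow> 'n::ab_group_add set \<Rightarrow>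
    ('b \<Rightarrow> 'n \<Rightarrow> 'n) \<Rightarrow> 'b set \<Rightarrow> ('m \<times> 'n \<Rightarrow> int) set"
  for M ract N lact B where
  zero: "(\<lambda>p. 0) \<in> trel M ract N lact B"
| add: "u \<in> trel M ract N lact B \<Longrightarrow> v \<in> trel M ract N lact B \<Longrightarrow> (\<lambda>p. u p + v p) \<in> trel M ract N lact B"
| neg: "u \<in> trel M ract N lact B \<Longrightarrow> (\<lambda>p. - u p) \<in> trel M ract N lact B"
| addl: "m \<in> M \<Longrightarrow> m' \<in> M \<Longrightarrow> n \<in> N \<Longrightarrow>
          (\<lambda>p. dl (m + m') n p - dl m n p - dl m' n p) \<in> trel M ract N lact B"
| addr: "m \<in> M \<Longrightarrow> n \<in> N \<Longrightarrow> n' \<in> N \<Longrightarrow>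
          (\<lambda>p. dl m (n + n') p - dl m n p - dl m n' p) \<in> trel M ract N lact B"
| bal: "m \<in> M \<Longrightarrow> n \<in> N \<Longrightarrow> b \<in> B \<Longrightarrow>
          (\<lambda>p. dl (ract m b) n p - dl m (lact b n) p) \<in> trel M ract N lact B"

definition tcls :: "'m::ab_group_add set \<Rightarrow> ('m \<Rightarrow> 'b \<Rightarrow> 'm) \<Rightarrow> 'n::ab_group_add set \<Rightarrow>
    ('b \<Rightarrow> 'n \<Rightarrow> 'n) \<Rightarrow> 'b set \<Rightarrow> ('m \<times> 'n \<Rightarrow> int) \<Rightarrow> ('m \<times> 'n \<Rightarrow> int) set" where
  "tcls M ract N lact B u = {v \<in> fsums M N. (\<lambda>p. u p - v p) \<in> trel M ract N lact B}"

definition tensor :: "'m::ab_group_add set \<Rightarrow> ('m \<Rightarrow> 'b \<Rightarrow> 'm) \<Rightarrow> 'n::ab_group_add set \<Rightarrow>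
    ('b \<Rightarrow> 'n \<Rightarrow> 'n) \<Rightarrow> 'b set \<Rightarrow> ('m \<times> 'n \<Rightarrow> int) set set" where
  "tensor M ract N lact B = tcls M ract N lact B ` fsums M N"

definition ptens where
  "ptens M ract N lact B m n = tcls M ract N lact B (dl m n)"

definition trep :: "('m \<times> 'n \<Rightarrow> int) set \<Rightarrow> ('m \<times> 'n \<Rightarrow> int)" where
  "trep C = (SOME u. u \<in> C)"

definition tadd where
  "tadd M ract N lact B C D = tcls M ract N lact B (\<lambda>p. trep C p + trep D p)"

text \<open>right multiplication by f acting on the second tensor factor\<close>
definition rmul_fs :: "('m \<times> 'n \<Rightarrow> int) \<Rightarrow> ('n \<Rightarrow> 'n) \<Rightarrow> ('m \<times> 'n \<Rightarrow> int)" where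
  "rmul_fs u g = (\<lambda>(m, n'). \<Sum>n\<in>{n. u (m, n) \<noteq> 0 \<and> g n = n'}. u (m, n))"

definition tract_right where
  "tract_right M ract N lact B C g = tcls M ract N lact B (rmul_fs (trep C) g)"

definition zsm :: "int \<Rightarrow> 'c::ab_group_add \<Rightarrow> 'c" where
  "zsm k x = (if 0 \<le> k then (\<Sum>i<nat k. x) else - (\<Sum>i<nat (- k). x))"

text \<open>the map on M \<otimes>_B N induced by a biadditive balanced map beta\<close>
definition tlin :: "('m \<Rightarrow> 'n \<Rightarrow> 'c::ab_group_add) \<Rightarrow> ('m \<times> 'n \<Rightarrow> int) set \<Rightarrow> 'c" where
  "tlin beta C = (let u = trep C in \<Sum>p\<in>{p. u p \<noteq> 0}. zsm (u p) (beta (fst p) (snd p)))"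

abbreviation Bsp where "Bsp q emb kK \<equiv> Lsp q emb kK 0"

abbreviation tensOL where
  "tensOL q emb kK n \<equiv> tensor (Om01 q emb kK) (om_rmul q emb kK) (Lsp q emb kK n) (*) (Bsp q emb kK)"

abbreviation tensLO where
  "tensLO q emb kK n \<equiv> tensor (Lsp q emb kK n) (*) (Om01 q emb kK) om_lmul (Bsp q emb kK)"

definition mu1 :: "('a::ring_1 \<times> 'a omega1 \<Rightarrow> int) set \<Rightarrow> 'a omega1" where
  "mu1 C = tlin (\<lambda>x w. om_lmul x w) C"

definition mu2 :: "real \<Rightarrow> (complex \<Rightarrow> 'a::ring_1) \<Rightarrow> ('a \<Rightarrow> 'a) \<Rightarrow> ('a omega1 \<times> 'a \<Rightarrow> int) set \<Rightarrow> 'a omega1" where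
  "mu2 q emb kK C = tlin (\<lambda>w x. om_rmul q emb kK w x) C"

definition Phi where
  "Phi q emb kK n C = (THE D. D \<in> tensOL q emb kK n \<and> mu2 q emb kK D = mu1 C)"

definition nablabar where
  "nablabar q emb kK kF n phi =
     (THE D. D \<in> tensOL q emb kK n \<and>
        mu2 q emb kK D = om_lmul (Xminus q emb kK kF phi) omega_minus)"

end

theory Submission
  imports Defs
begin

text \<open>The multiplication map \<open>\<mu>\<^sub>2 : \<Omega>\<^sup>0\<^sup>1 \<otimes>\<^sub>B L(n) \<rightarrow> L(n-2) \<omega>\<^sub>-\<close> is bijective. Both directions
  rest on the strong grading of \<open>A(SU\<^sub>q(2))\<close>: the relations \<open>a a\<^sup>* + q\<^sup>2 c c\<^sup>* = 1\<close> and
  \<open>a\<^sup>* a + c\<^sup>* c = 1\<close> yield \<open>w\<^sub>j \<in> L(-n)\<close> and \<open>v\<^sub>j \<in> L(n)\<close> with \<open>\<Sum> w\<^sub>j v\<^sub>j = 1\<close>. As \<open>y w\<^sub>j \<in> B\<close> for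
  \<open>y \<in> L(n)\<close>, every tensor \<open>x\<omega>\<^sub>- \<otimes> y\<close> equals \<open>\<Sum> (x y w\<^sub>j \<omega>\<^sub>-) \<otimes> v\<^sub>j\<close>, so a tensor is determined
  by its image under \<open>\<mu>\<^sub>2\<close>. Hence \<open>\<nabla>\<close> and \<open>\<Phi>\<close> are well defined, and both sides of the
  identity can be compared after applying \<open>\<mu>\<^sub>2\<close>, which is right \<open>B\<close>-linear. There the claim
  becomes \<open>X\<^sub>-(\<eta> f) = X\<^sub>-(\<eta>) f + \<eta> X\<^sub>-(f)\<close> for \<open>f \<in> B\<close>, which holds because \<open>K\<close> fixes \<open>B\<close>.\<close>

section \<open>Integer multiples\<close>

lemma zsm_0 [simp]: "zsm 0 x = 0"
  by (simp add: zsm_def)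

lemma zsm_1 [simp]: "zsm 1 x = x"
  by (simp add: zsm_def)

lemma zsm_add_1: "zsm (k + 1) x = zsm k x + x"
proof (cases "0 \<le> k")
  case True
  then have "nat (k + 1) = Suc (nat k)" by simp
  with True show ?thesis by (simp add: zsm_def add.commute)
next
  case False
  then have "nat (- k) = Suc (nat (- (k + 1)))" by simp
  with False show ?thesis by (auto simp: zsm_def)
qed

lemma zsm_add: "zsm (k + l) x = zsm k x + zsm l x"
proof (induction l rule: int_induct[where k = 0])
  case (step1 l)
  then show ?case by (metis add.assoc zsm_add_1)
next
  case (step2 l)
  have "zsm (k + l) x = zsm (k + l - 1) x + x" "zsm l x = zsm (l - 1) x + x"
    using zsm_add_1[of "k + l - 1" x] zsm_add_1[of "l - 1" x] by simp_all
  with step2.IH show ?case by (simp add: algebra_simps)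
qed simp

lemma zsm_minus: "zsm (- k) x = - zsm k x"
  using minus_unique[of "zsm k x" "zsm (- k) x"] zsm_add[of k "- k" x] by simp

lemma zsm_sub_1: "zsm (k - 1) x = zsm k x + - x"
  using zsm_add[of k "- 1" x] by (simp add: zsm_minus)

lemma additive_zsm:
  assumes "Modules.additive h"
  shows "h (zsm k x) = zsm k (h x)"
proof (induction k rule: int_induct[where k = 0])
  case base
  then show ?case using additive.zero[OF assms] by simp
next
  case (step1 k)
  then show ?case by (simp add: zsm_add_1 additive.add[OF assms])
next
  case (step2 k)
  then show ?case by (simp add: zsm_sub_1 additive.diff[OF assms])
qed

lemma zsm_sum: "zsm (\<Sum>i\<in>I. f i) x = (\<Sum>i\<in>I. zsm (f i) x)"
  by (induction I rule: infinite_finite_induct) (simp_all add: zsm_add)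

lemma zsm_ring: "zsm k (x::'a::ring_1) = of_int k * x"
  by (simp add: zsm_def)

lemma fst_zsm: "fst (zsm k w) = zsm k (fst w)"
  by (simp add: zsm_def fst_sum)

lemma snd_zsm: "snd (zsm k w) = zsm k (snd w)"
  by (simp add: zsm_def snd_sum)

lemma zsm_triple: "zsm k ((x, y, z) :: 'a::ring_1 omega1) = (of_int k * x, of_int k * y, of_int k * z)"
  by (simp add: prod_eq_iff fst_zsm snd_zsm zsm_ring)

lemma zsm_in_subgroup:
  assumes "x \<in> X" and "0 \<in> X" and "\<And>y z. y \<in> X \<Longrightarrow> z \<in> X \<Longrightarrow> y + z \<in> X" and "\<And>y. y \<in> X \<Longrightarrow> - y \<in> X"
  shows "zsm k x \<in> X"
proof (induction k rule: int_induct[where k = 0])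
  case (step1 k)
  then show ?case using assms(1,3) by (simp add: zsm_add_1)
next
  case (step2 k)
  show ?case unfolding zsm_sub_1 using step2.IH assms(1,3,4) by blast
qed (simp add: assms(2))

section \<open>Balanced tensor products\<close>

definition lin_ext :: "('m \<Rightarrow> 'n \<Rightarrow> 'c::ab_group_add) \<Rightarrow> ('m \<times> 'n \<Rightarrow> int) \<Rightarrow> 'c" where
  "lin_ext \<beta> u = (\<Sum>p\<in>{p. u p \<noteq> 0}. zsm (u p) (\<beta> (fst p) (snd p)))"

definition balanced_map ::
    "'m::ab_group_add set \<Rightarrow> ('m \<Rightarrow> 'b \<Rightarrow> 'm) \<Rightarrow> 'n::ab_group_add set \<Rightarrow> ('b \<Rightarrow> 'n \<Rightarrow> 'n) \<Rightarrow>
     'b set \<Rightarrow> ('m \<Rightarrow> 'n \<Rightarrow> 'c::ab_group_add) \<Rightarrow> bool" where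
  "balanced_map M ract N lact B \<beta> \<longleftrightarrow>
     (\<forall>m\<in>M. \<forall>m'\<in>M. \<forall>n\<in>N. \<beta> (m + m') n = \<beta> m n + \<beta> m' n) \<and>
     (\<forall>m\<in>M. \<forall>n\<in>N. \<forall>n'\<in>N. \<beta> m (n + n') = \<beta> m n + \<beta> m n') \<and>
     (\<forall>m\<in>M. \<forall>n\<in>N. \<forall>b\<in>B. \<beta> (ract m b) n = \<beta> m (lact b n))"

definition tequiv where
  "tequiv M ract N lact B u v \<longleftrightarrow> (\<lambda>p. u p - v p) \<in> trel M ract N lact B"

lemma tlin_eq_lin_ext: "tlin \<beta> C = lin_ext \<beta> (trep C)"
  by (simp add: tlin_def lin_ext_def Let_def)

lemma lin_ext_eq_sum_superset:
  "finite S \<Longrightarrow> {p. u p \<noteq> 0} \<subseteq> S \<Longrightarrow> lin_ext \<beta> u = (\<Sum>p\<in>S. zsm (u p) (\<beta> (fst p) (snd p)))"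
  unfolding lin_ext_def by (rule sum.mono_neutral_left) auto

lemma lin_ext_zero [simp]: "lin_ext \<beta> (\<lambda>p. 0) = 0"
  by (simp add: lin_ext_def)

lemma lin_ext_add:
  assumes "finite {p. u p \<noteq> 0}" and "finite {p. v p \<noteq> 0}"
  shows "lin_ext \<beta> (\<lambda>p. u p + v p) = lin_ext \<beta> u + lin_ext \<beta> v"
proof -
  let ?S = "{p. u p \<noteq> 0} \<union> {p. v p \<noteq> 0}"
  have S: "finite ?S" using assms by simp
  have "lin_ext \<beta> (\<lambda>p. u p + v p) = (\<Sum>p\<in>?S. zsm (u p + v p) (\<beta> (fst p) (snd p)))"
    by (rule lin_ext_eq_sum_superset[OF S]) auto
  also have "\<dots> = lin_ext \<beta> u + lin_ext \<beta> v"
    by (simp add: zsm_add sum.distrib lin_ext_eq_sum_superset[OF S])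
  finally show ?thesis .
qed

lemma lin_ext_uminus: "lin_ext \<beta> (\<lambda>p. - u p) = - lin_ext \<beta> u"
  by (simp add: lin_ext_def zsm_minus sum_negf)

lemma lin_ext_diff:
  "finite {p. u p \<noteq> 0} \<Longrightarrow> finite {p. v p \<noteq> 0} \<Longrightarrow>
   lin_ext \<beta> (\<lambda>p. u p - v p) = lin_ext \<beta> u - lin_ext \<beta> v"
  using lin_ext_add[of u "\<lambda>p. - v p" \<beta>] by (simp add: lin_ext_uminus)

lemma support_dl: "{p. dl m n p \<noteq> 0} = {(m, n)}"
  by (auto simp: dl_def)

lemma finite_support_dl [simp]: "finite {p. dl m n p \<noteq> 0}"
  by (simp add: support_dl)

lemma finite_support_dl_diff [simp]: "finite {p. dl m n p - dl m' n' p \<noteq> 0}"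
  by (rule finite_subset[of _ "{(m, n), (m', n')}"]) (auto simp: dl_def)

lemma lin_ext_dl [simp]: "lin_ext \<beta> (dl m n) = \<beta> m n"
  by (simp add: lin_ext_def support_dl dl_def)

lemma finite_support_sum:
  "finite I \<Longrightarrow> (\<And>i. i \<in> I \<Longrightarrow> finite {p. f i p \<noteq> (0::int)}) \<Longrightarrow> finite {p. (\<Sum>i\<in>I. f i p) \<noteq> 0}"
  by (rule finite_subset[of _ "\<Union>i\<in>I. {p. f i p \<noteq> 0}"])
     (auto elim: sum.not_neutral_contains_not_neutral)

lemma lin_ext_sum:
  "finite I \<Longrightarrow> (\<And>i. i \<in> I \<Longrightarrow> finite {p. f i p \<noteq> (0::int)}) \<Longrightarrow>
   lin_ext \<beta> (\<lambda>p. \<Sum>i\<in>I. f i p) = (\<Sum>i\<in>I. lin_ext \<beta> (f i))"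
  by (induction I rule: finite_induct) (simp_all add: lin_ext_add finite_support_sum)

lemma finite_support_trel: "u \<in> trel M ract N lact B \<Longrightarrow> finite {p. u p \<noteq> 0}"
proof (induction rule: trel.induct)
  case (add u v)
  have "{p. u p + v p \<noteq> 0} \<subseteq> {p. u p \<noteq> 0} \<union> {p. v p \<noteq> 0}" by auto
  with add.IH show ?case by (meson finite_Un finite_subset)
next
  case (addl m m' n)
  show ?case by (rule finite_subset[of _ "{(m + m', n), (m, n), (m', n)}"]) (auto simp: dl_def)
next
  case (addr m n n')
  show ?case by (rule finite_subset[of _ "{(m, n + n'), (m, n), (m, n')}"]) (auto simp: dl_def)
next
  case (bal m n b)
  show ?case by (rule finite_subset[of _ "{(ract m b, n), (m, lact b n)}"]) (auto simp: dl_def)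
qed auto

lemma lin_ext_trel:
  assumes "balanced_map M ract N lact B \<beta>" and "u \<in> trel M ract N lact B"
  shows "lin_ext \<beta> u = 0"
  using assms(2)
proof (induction rule: trel.induct)
  case (add u v)
  then show ?case by (simp add: lin_ext_add finite_support_trel)
next
  case (neg u)
  then show ?case by (simp add: lin_ext_uminus)
next
  case (addl m m' n)
  have "lin_ext \<beta> (\<lambda>p. dl (m + m') n p - dl m n p - dl m' n p) = \<beta> (m + m') n - \<beta> m n - \<beta> m' n"
    by (simp only: lin_ext_diff[OF finite_support_dl_diff finite_support_dl]
        lin_ext_diff[OF finite_support_dl finite_support_dl] lin_ext_dl)
  with addl show ?case
    using assms(1) by (simp add: balanced_map_def)
next
  case (addr m n n')
  have "lin_ext \<beta> (\<lambda>p. dl m (n + n') p - dl m n p - dl m n' p) = \<beta> m (n + n') - \<beta> m n - \<beta> m n'"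
    by (simp only: lin_ext_diff[OF finite_support_dl_diff finite_support_dl]
        lin_ext_diff[OF finite_support_dl finite_support_dl] lin_ext_dl)
  with addr show ?case
    using assms(1) by (simp add: balanced_map_def)
next
  case (bal m n b)
  then show ?case
    using assms(1) by (simp add: lin_ext_diff balanced_map_def)
qed simp

lemma tequiv_refl: "tequiv M ract N lact B u u"
  by (simp add: tequiv_def trel.zero)

lemma tequiv_eqI: "u = v \<Longrightarrow> tequiv M ract N lact B u v"
  by (simp add: tequiv_refl)

lemma tequiv_sym: "tequiv M ract N lact B u v \<Longrightarrow> tequiv M ract N lact B v u"
  unfolding tequiv_def using trel.neg by fastforce

lemma tequiv_trans [trans]:
  "tequiv M ract N lact B u v \<Longrightarrow> tequiv M ract N lact B v w \<Longrightarrow> tequiv M ract N lact B u w"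
  unfolding tequiv_def using trel.add by fastforce

lemma tequiv_add:
  "tequiv M ract N lact B u u' \<Longrightarrow> tequiv M ract N lact B v v' \<Longrightarrow>
   tequiv M ract N lact B (\<lambda>p. u p + v p) (\<lambda>p. u' p + v' p)"
  unfolding tequiv_def using trel.add[of "\<lambda>p. u p - u' p" M ract N lact B "\<lambda>p. v p - v' p"]
  by (simp add: algebra_simps)

lemma trel_scale:
  assumes u: "u \<in> trel M ract N lact B"
  shows "(\<lambda>p. k * u p) \<in> trel M ract N lact B"
proof (induction k rule: int_induct[where k = 0])
  case base
  then show ?case using trel.zero by simp
next
  case (step1 k)
  then have "(\<lambda>p. k * u p + u p) \<in> trel M ract N lact B" using u by (intro trel.add)
  then show ?case by (simp add: algebra_simps)
next
  case (step2 k)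
  then have "(\<lambda>p. k * u p + - u p) \<in> trel M ract N lact B" using u by (intro trel.add trel.neg)
  then show ?case by (simp add: algebra_simps)
qed

lemma tequiv_scale:
  "tequiv M ract N lact B u v \<Longrightarrow> tequiv M ract N lact B (\<lambda>p. k * u p) (\<lambda>p. k * v p)"
  unfolding tequiv_def using trel_scale[of "\<lambda>p. u p - v p" M ract N lact B k]
  by (simp add: algebra_simps)

lemma tequiv_sum:
  "finite I \<Longrightarrow> (\<And>i. i \<in> I \<Longrightarrow> tequiv M ract N lact B (f i) (g i)) \<Longrightarrow>
   tequiv M ract N lact B (\<lambda>p. \<Sum>i\<in>I. f i p) (\<lambda>p. \<Sum>i\<in>I. g i p)"
  by (induction I rule: finite_induct) (simp_all add: tequiv_refl tequiv_add)

lemma tequiv_dl_addl: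
  "m \<in> M \<Longrightarrow> m' \<in> M \<Longrightarrow> n \<in> N \<Longrightarrow>
   tequiv M ract N lact B (dl (m + m') n) (\<lambda>p. dl m n p + dl m' n p)"
  unfolding tequiv_def using trel.addl[of m M m' n N ract lact B] by (simp add: algebra_simps)

lemma tequiv_dl_addr:
  "m \<in> M \<Longrightarrow> n \<in> N \<Longrightarrow> n' \<in> N \<Longrightarrow>
   tequiv M ract N lact B (dl m (n + n')) (\<lambda>p. dl m n p + dl m n' p)"
  unfolding tequiv_def using trel.addr[of m M n N n' ract lact B] by (simp add: algebra_simps)

lemma tequiv_dl_balanced:
  "m \<in> M \<Longrightarrow> n \<in> N \<Longrightarrow> b \<in> B \<Longrightarrow> tequiv M ract N lact B (dl (ract m b) n) (dl m (lact b n))"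
  unfolding tequiv_def using trel.bal[of m M n N b B ract lact] by simp

lemma tequiv_dl_zero_left: "0 \<in> M \<Longrightarrow> n \<in> N \<Longrightarrow> tequiv M ract N lact B (dl 0 n) (\<lambda>p. 0)"
  using trel.neg[OF trel.addl[of 0 M 0 n N ract lact B]] by (simp add: tequiv_def)

lemma tequiv_dl_zero_right: "m \<in> M \<Longrightarrow> 0 \<in> N \<Longrightarrow> tequiv M ract N lact B (dl m 0) (\<lambda>p. 0)"
  using trel.neg[OF trel.addr[of m M 0 N 0 ract lact B]] by (simp add: tequiv_def)

lemma sum_in_add_closed:
  assumes "\<And>j. j \<in> J \<Longrightarrow> x j \<in> X" and "0 \<in> X" and "\<And>y z. y \<in> X \<Longrightarrow> z \<in> X \<Longrightarrow> y + z \<in> X"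
  shows "(\<Sum>j\<in>J. x j) \<in> X"
  using assms(1) by (induction J rule: infinite_finite_induct) (auto intro: assms(2,3))

lemma tequiv_dl_sum_left:
  assumes "finite J" and "n \<in> N" and "\<And>j. j \<in> J \<Longrightarrow> m j \<in> M"
    and "0 \<in> M" and "\<And>x y. x \<in> M \<Longrightarrow> y \<in> M \<Longrightarrow> x + y \<in> M"
  shows "tequiv M ract N lact B (dl (\<Sum>j\<in>J. m j) n) (\<lambda>p. \<Sum>j\<in>J. dl (m j) n p)"
  using assms(1,3)
proof (induction J rule: finite_induct)
  case empty
  then show ?case using tequiv_dl_zero_left[OF assms(4,2)] by simp
next
  case (insert j J)
  have "(\<Sum>j\<in>J. m j) \<in> M"
    using insert.prems assms(4,5) by (intro sum_in_add_closed) auto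
  then have "tequiv M ract N lact B (dl (m j + (\<Sum>j\<in>J. m j)) n) (\<lambda>p. dl (m j) n p + dl (\<Sum>j\<in>J. m j) n p)"
    using insert.prems assms(2) by (intro tequiv_dl_addl) auto
  also have "tequiv M ract N lact B \<dots> (\<lambda>p. dl (m j) n p + (\<Sum>j\<in>J. dl (m j) n p))"
    using insert by (intro tequiv_add tequiv_refl) auto
  finally show ?case using insert.hyps by simp
qed

lemma tequiv_dl_sum_right:
  assumes "finite J" and "m \<in> M" and "\<And>j. j \<in> J \<Longrightarrow> n j \<in> N"
    and "0 \<in> N" and "\<And>x y. x \<in> N \<Longrightarrow> y \<in> N \<Longrightarrow> x + y \<in> N"
  shows "tequiv M ract N lact B (dl m (\<Sum>j\<in>J. n j)) (\<lambda>p. \<Sum>j\<in>J. dl m (n j) p)"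
  using assms(1,3)
proof (induction J rule: finite_induct)
  case empty
  then show ?case using tequiv_dl_zero_right[OF assms(2,4)] by simp
next
  case (insert j J)
  have "(\<Sum>j\<in>J. n j) \<in> N"
    using insert.prems assms(4,5) by (intro sum_in_add_closed) auto
  then have "tequiv M ract N lact B (dl m (n j + (\<Sum>j\<in>J. n j))) (\<lambda>p. dl m (n j) p + dl m (\<Sum>j\<in>J. n j) p)"
    using insert.prems assms(2) by (intro tequiv_dl_addr) auto
  also have "tequiv M ract N lact B \<dots> (\<lambda>p. dl m (n j) p + (\<Sum>j\<in>J. dl m (n j) p))"
    using insert by (intro tequiv_add tequiv_refl) auto
  finally show ?case using insert.hyps by simp
qed

lemma tequiv_dl_zsm_left:
  assumes m: "m \<in> M" and n: "n \<in> N"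
    and M: "0 \<in> M" "\<And>x y. x \<in> M \<Longrightarrow> y \<in> M \<Longrightarrow> x + y \<in> M" "\<And>x. x \<in> M \<Longrightarrow> - x \<in> M"
  shows "tequiv M ract N lact B (dl (zsm k m) n) (\<lambda>p. k * dl m n p)"
proof (induction k rule: int_induct[where k = 0])
  case base
  then show ?case using tequiv_dl_zero_left[OF M(1) n] by simp
next
  case (step1 k)
  have "tequiv M ract N lact B (dl (zsm k m + m) n) (\<lambda>p. dl (zsm k m) n p + dl m n p)"
    using m n M by (intro tequiv_dl_addl zsm_in_subgroup)
  also have "tequiv M ract N lact B \<dots> (\<lambda>p. k * dl m n p + dl m n p)"
    using step1.IH by (intro tequiv_add tequiv_refl)
  finally show ?case by (simp add: zsm_add_1 distrib_right)
next
  case (step2 k)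
  have "tequiv M ract N lact B (dl (zsm (k - 1) m + m) n) (\<lambda>p. dl (zsm (k - 1) m) n p + dl m n p)"
    using m n M by (intro tequiv_dl_addl zsm_in_subgroup)
  then have "tequiv M ract N lact B (\<lambda>p. dl (zsm (k - 1) m) n p + dl m n p) (\<lambda>p. k * dl m n p)"
    using step2.IH zsm_add_1[of "k - 1" m] by (auto intro: tequiv_trans tequiv_sym)
  then have "tequiv M ract N lact B (\<lambda>p. dl (zsm (k - 1) m) n p + dl m n p + - dl m n p)
      (\<lambda>p. k * dl m n p + - dl m n p)"
    by (intro tequiv_add tequiv_refl)
  then show ?case by (simp add: algebra_simps)
qed

lemma tcls_cong: "tequiv M ract N lact B u v \<Longrightarrow> tcls M ract N lact B u = tcls M ract N lact B v"
  unfolding tcls_def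
  by (metis tequiv_def tequiv_sym tequiv_trans)

lemma trep_in_tcls: "u \<in> fsums M N \<Longrightarrow> trep (tcls M ract N lact B u) \<in> tcls M ract N lact B u"
  unfolding trep_def by (rule someI[of _ u]) (simp add: tcls_def trel.zero)

lemma trep_tcls:
  assumes "u \<in> fsums M N"
  shows "trep (tcls M ract N lact B u) \<in> fsums M N"
    and "tequiv M ract N lact B u (trep (tcls M ract N lact B u))"
  using trep_in_tcls[OF assms, where ract = ract and lact = lact and B = B]
  by (simp_all add: tcls_def tequiv_def)

lemma tensor_trep:
  assumes "C \<in> tensor M ract N lact B"
  shows "trep C \<in> fsums M N" and "C = tcls M ract N lact B (trep C)"
proof -
  obtain u where u: "u \<in> fsums M N" "C = tcls M ract N lact B u"
    using assms by (auto simp: tensor_def)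
  then show "trep C \<in> fsums M N" using trep_tcls(1) by blast
  show "C = tcls M ract N lact B (trep C)"
    using u tcls_cong[OF trep_tcls(2)[OF u(1)]] by blast
qed

lemma finite_support_fsums: "u \<in> fsums M N \<Longrightarrow> finite {p. u p \<noteq> 0}"
  by (simp add: fsums_def)

lemma tlin_tcls:
  assumes "balanced_map M ract N lact B \<beta>" and u: "u \<in> fsums M N"
  shows "tlin \<beta> (tcls M ract N lact B u) = lin_ext \<beta> u"
proof -
  let ?v = "trep (tcls M ract N lact B u)"
  have "lin_ext \<beta> (\<lambda>p. u p - ?v p) = 0"
    using assms(1) trep_tcls(2)[OF u, where ract = ract and lact = lact and B = B, unfolded tequiv_def]
    by (rule lin_ext_trel)
  moreover have "finite {p. ?v p \<noteq> 0}"
    using trep_tcls(1)[OF u] finite_support_fsums by blast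
  ultimately show ?thesis
    using lin_ext_diff[OF finite_support_fsums[OF u], of ?v \<beta>] by (simp add: tlin_eq_lin_ext)
qed

lemma tlin_ptens:
  "balanced_map M ract N lact B \<beta> \<Longrightarrow> m \<in> M \<Longrightarrow> n \<in> N \<Longrightarrow> tlin \<beta> (ptens M ract N lact B m n) = \<beta> m n"
  unfolding ptens_def by (subst tlin_tcls) (auto simp: fsums_def support_dl)

lemma tensor_eqI:
  assumes "C \<in> tensor M ract N lact B" "D \<in> tensor M ract N lact B"
    and "tequiv M ract N lact B (trep C) (trep D)"
  shows "C = D"
  using assms tensor_trep(2) tcls_cong by metis

lemma fsums_add:
  assumes "u \<in> fsums M N" and "v \<in> fsums M N"
  shows "(\<lambda>p. u p + v p) \<in> fsums M N"
proof -
  have sub: "{p. u p + v p \<noteq> 0} \<subseteq> {p. u p \<noteq> 0} \<union> {p. v p \<noteq> 0}" by auto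
  show ?thesis using assms finite_subset[OF sub] sub by (auto simp: fsums_def)
qed

lemma tadd_in_tensor:
  "C \<in> tensor M ract N lact B \<Longrightarrow> D \<in> tensor M ract N lact B \<Longrightarrow> tadd M ract N lact B C D \<in> tensor M ract N lact B"
proof -
  assume "C \<in> tensor M ract N lact B" "D \<in> tensor M ract N lact B"
  then have "(\<lambda>p. trep C p + trep D p) \<in> fsums M N"
    by (intro fsums_add tensor_trep(1))
  then show ?thesis unfolding tadd_def tensor_def by (rule imageI)
qed

lemma tlin_tadd:
  assumes "balanced_map M ract N lact B \<beta>" and C: "C \<in> tensor M ract N lact B" and D: "D \<in> tensor M ract N lact B"
  shows "tlin \<beta> (tadd M ract N lact B C D) = tlin \<beta> C + tlin \<beta> D"
proof -
  have u: "trep C \<in> fsums M N" "trep D \<in> fsums M N"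
    using tensor_trep(1) C D by blast+
  then have "tlin \<beta> (tadd M ract N lact B C D) = lin_ext \<beta> (\<lambda>p. trep C p + trep D p)"
    unfolding tadd_def by (intro tlin_tcls assms(1) fsums_add)
  with u show ?thesis by (simp add: lin_ext_add finite_support_fsums tlin_eq_lin_ext)
qed

lemma support_rmul_fs: "{r. rmul_fs u g r \<noteq> 0} \<subseteq> (\<lambda>p. (fst p, g (snd p))) ` {p. u p \<noteq> 0}"
proof
  fix r assume "r \<in> {r. rmul_fs u g r \<noteq> 0}"
  moreover obtain m n' where r: "r = (m, n')" by (cases r)
  ultimately have "(\<Sum>n\<in>{n. u (m, n) \<noteq> 0 \<and> g n = n'}. u (m, n)) \<noteq> 0"
    by (simp add: rmul_fs_def)
  then obtain n where "u (m, n) \<noteq> 0" "g n = n'"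
    by (auto elim: sum.not_neutral_contains_not_neutral)
  then have "(m, n) \<in> {p. u p \<noteq> 0}" "r = (\<lambda>p. (fst p, g (snd p))) (m, n)"
    using r by simp_all
  then show "r \<in> (\<lambda>p. (fst p, g (snd p))) ` {p. u p \<noteq> 0}" by (rule rev_image_eqI)
qed

lemma rmul_fs_in_fsums:
  assumes u: "u \<in> fsums M N" and g: "\<And>n. n \<in> N \<Longrightarrow> g n \<in> N"
  shows "rmul_fs u g \<in> fsums M N"
proof -
  have "(\<lambda>p. (fst p, g (snd p))) ` {p. u p \<noteq> 0} \<subseteq> M \<times> N"
    using u g by (auto simp: fsums_def)
  moreover have "finite ((\<lambda>p. (fst p, g (snd p))) ` {p. u p \<noteq> 0})"
    using u by (simp add: fsums_def)
  ultimately show ?thesis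
    using support_rmul_fs[of u g] unfolding fsums_def by (blast intro: finite_subset)
qed

lemma lin_ext_rmul_fs:
  assumes fin: "finite {p. u p \<noteq> 0}"
  shows "lin_ext \<beta> (rmul_fs u g) = (\<Sum>p\<in>{p. u p \<noteq> 0}. zsm (u p) (\<beta> (fst p) (g (snd p))))"
proof -
  let ?S = "{p. u p \<noteq> 0}" and ?G = "\<lambda>p. (fst p, g (snd p))"
  have "lin_ext \<beta> (rmul_fs u g) = (\<Sum>r\<in>?G ` ?S. zsm (rmul_fs u g r) (\<beta> (fst r) (snd r)))"
    using fin by (intro lin_ext_eq_sum_superset support_rmul_fs) simp
  also have "\<dots> = (\<Sum>r\<in>?G ` ?S. \<Sum>p\<in>{p\<in>?S. ?G p = r}. zsm (u p) (\<beta> (fst p) (g (snd p))))"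
  proof (rule sum.cong[OF refl])
    fix r :: "'a \<times> 'b"
    obtain m n' where r: "r = (m, n')" by (cases r)
    let ?A = "{n. u (m, n) \<noteq> 0 \<and> g n = n'}"
    have A: "{p\<in>?S. ?G p = r} = Pair m ` ?A" using r by auto
    have "rmul_fs u g r = (\<Sum>n\<in>?A. u (m, n))" using r by (simp add: rmul_fs_def)
    also have "\<dots> = (\<Sum>p\<in>{p\<in>?S. ?G p = r}. u p)"
      unfolding A by (subst sum.reindex) (auto simp: inj_on_def)
    finally have "zsm (rmul_fs u g r) (\<beta> (fst r) (snd r)) = (\<Sum>p\<in>{p\<in>?S. ?G p = r}. zsm (u p) (\<beta> (fst r) (snd r)))"
      by (simp add: zsm_sum)
    also have "\<dots> = (\<Sum>p\<in>{p\<in>?S. ?G p = r}. zsm (u p) (\<beta> (fst p) (g (snd p))))"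
      by (rule sum.cong) auto
    finally show "zsm (rmul_fs u g r) (\<beta> (fst r) (snd r)) = \<dots>" .
  qed
  also have "\<dots> = (\<Sum>p\<in>?S. zsm (u p) (\<beta> (fst p) (g (snd p))))"
    using fin by (intro sum.group) auto
  finally show ?thesis .
qed

lemma tract_right_in_tensor:
  "C \<in> tensor M ract N lact B \<Longrightarrow> (\<And>n. n \<in> N \<Longrightarrow> g n \<in> N) \<Longrightarrow>
   tract_right M ract N lact B C g \<in> tensor M ract N lact B"
proof -
  assume "C \<in> tensor M ract N lact B" "\<And>n. n \<in> N \<Longrightarrow> g n \<in> N"
  then have "rmul_fs (trep C) g \<in> fsums M N"
    by (intro rmul_fs_in_fsums tensor_trep(1))
  then show ?thesis unfolding tract_right_def tensor_def by (rule imageI)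
qed

lemma tlin_tract_right:
  assumes "balanced_map M ract N lact B \<beta>" and C: "C \<in> tensor M ract N lact B"
    and g: "\<And>n. n \<in> N \<Longrightarrow> g n \<in> N"
    and h: "Modules.additive h" "\<And>m n. m \<in> M \<Longrightarrow> n \<in> N \<Longrightarrow> \<beta> m (g n) = h (\<beta> m n)"
  shows "tlin \<beta> (tract_right M ract N lact B C g) = h (tlin \<beta> C)"
proof -
  have u: "trep C \<in> fsums M N" by (rule tensor_trep(1)[OF C])
  then have "tlin \<beta> (tract_right M ract N lact B C g) = lin_ext \<beta> (rmul_fs (trep C) g)"
    unfolding tract_right_def using g by (intro tlin_tcls assms(1) rmul_fs_in_fsums)
  also have "\<dots> = (\<Sum>p\<in>{p. trep C p \<noteq> 0}. zsm (trep C p) (\<beta> (fst p) (g (snd p))))"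
    using u by (simp add: lin_ext_rmul_fs finite_support_fsums)
  also have "\<dots> = (\<Sum>p\<in>{p. trep C p \<noteq> 0}. h (zsm (trep C p) (\<beta> (fst p) (snd p))))"
  proof (rule sum.cong[OF refl])
    fix p assume "p \<in> {p. trep C p \<noteq> 0}"
    then have "fst p \<in> M" "snd p \<in> N" using u by (auto simp: fsums_def)
    then show "zsm (trep C p) (\<beta> (fst p) (g (snd p))) = h (zsm (trep C p) (\<beta> (fst p) (snd p)))"
      by (simp add: h(2) additive_zsm[OF h(1)])
  qed
  also have "\<dots> = h (tlin \<beta> C)"
    by (simp add: additive.sum[OF h(1)] tlin_eq_lin_ext lin_ext_def)
  finally show ?thesis .
qed

lemma fs_decompose:
  assumes "finite {p. u p \<noteq> 0}"
  shows "u = (\<lambda>p. \<Sum>r\<in>{p. u p \<noteq> 0}. u r * dl (fst r) (snd r) p)"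
proof
  fix p
  have "u p = (if p \<in> {p. u p \<noteq> 0} then u p else 0)"
    by simp
  also have "\<dots> = (\<Sum>r\<in>{p. u p \<noteq> 0}. if r = p then u r else 0)"
    by (rule sum.delta[OF assms, symmetric])
  also have "\<dots> = (\<Sum>r\<in>{p. u p \<noteq> 0}. u r * dl (fst r) (snd r) p)"
    by (intro sum.cong refl) (cases "r = p"; simp add: dl_def)
  finally show "u p = (\<Sum>r\<in>{p. u p \<noteq> 0}. u r * dl (fst r) (snd r) p)" .
qed

lemma sum_list_concat_map:
  "sum_list (map g (concat (map h xs))) = sum_list (map (\<lambda>x. sum_list (map g (h x))) xs)"
  by (induction xs) auto

lemma om_lmul_omega_minus [simp]: "om_lmul x omega_minus = (0, x, 0)"
  by (simp add: om_lmul_def omega_minus_def)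

lemma balanced_om_lmul: "balanced_map M (*) N om_lmul B (om_lmul :: 'a::ring_1 \<Rightarrow> 'a omega1 \<Rightarrow> 'a omega1)"
  by (simp add: balanced_map_def om_lmul_def distrib_left distrib_right mult.assoc)

section \<open>The grading of A(SU_q(2)) by the action of K\<close>

locale suq2 =
  fixes q :: real and emb :: "complex \<Rightarrow> 'a::ring_1" and st :: "'a \<Rightarrow> 'a"
    and a c :: 'a and kK kKi kF :: "'a \<Rightarrow> 'a"
  assumes q_pos: "0 < q" and q_less_1: "q < 1"
    and emb_1: "emb 1 = 1" and emb_add: "emb (z + z') = emb z + emb z'"
    and emb_mult: "emb (z * z') = emb z * emb z'" and emb_commute: "emb z * x = x * emb z"
    and kK_add: "kK (x + y) = kK x + kK y" and kK_emb: "kK (emb z * x) = emb z * kK x"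
    and kF_emb: "kF (emb z * x) = emb z * kF x"
    and kKi_kK: "kKi (kK x) = x" and kK_kF: "kK (kF x) = emb (cq (1 / q)) * kF (kK x)"
    and kK_mult: "kK (x * y) = kK x * kK y" and kK_1: "kK 1 = 1"
    and kF_mult: "kF (x * y) = kF x * kK y + kKi x * kF y"
    and sa_a_sc_c: "st a * a + st c * c = 1"
    and a_sa_c_sc: "a * st a + emb (cq (q^2)) * c * st c = 1"
    and kK_a: "kK a = emb (cq (q powr (-1/2))) * a" and kK_c: "kK c = emb (cq (q powr (-1/2))) * c"
    and kK_sa: "kK (st a) = emb (cq (q powr (1/2))) * st a"
    and kK_sc: "kK (st c) = emb (cq (q powr (1/2))) * st c"
begin

lemma additive_kK: "Modules.additive kK"
  by (simp add: Modules.additive_def kK_add)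

lemma emb_left_commute: "emb z * (x * y) = x * (emb z * y)"
  by (metis emb_commute mult.assoc)

lemma emb_powr_inverse: "emb (cq (q powr r)) * emb (cq (q powr (- r))) = 1"
proof -
  have "q powr r * q powr (- r) = 1"
    using q_pos by (simp add: powr_add [symmetric])
  then have "emb (cq (q powr r * q powr (- r))) = 1"
    by (simp only: of_real_1 emb_1)
  then show ?thesis
    by (simp add: emb_mult)
qed

abbreviation L :: "int \<Rightarrow> 'a set" where
  "L k \<equiv> Lsp q emb kK k"

lemma L_iff: "x \<in> L k \<longleftrightarrow> kK x = emb (cq (q powr (real_of_int k / 2))) * x"
  by (simp add: Lsp_def)

lemma L_zero: "0 \<in> L k"
  by (simp add: L_iff additive.zero[OF additive_kK])

lemma L_add: "x \<in> L k \<Longrightarrow> y \<in> L k \<Longrightarrow> x + y \<in> L k"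
  by (simp add: L_iff additive.add[OF additive_kK] distrib_left)

lemma L_uminus: "x \<in> L k \<Longrightarrow> - x \<in> L k"
  by (simp add: L_iff additive.minus[OF additive_kK])

lemma L_emb: "x \<in> L k \<Longrightarrow> emb z * x \<in> L k"
proof -
  assume "x \<in> L k"
  then have "kK (emb z * x) = emb z * (emb (cq (q powr (real_of_int k / 2))) * x)"
    by (simp add: L_iff kK_emb)
  also have "\<dots> = emb (cq (q powr (real_of_int k / 2))) * (emb z * x)"
    by (rule emb_left_commute)
  finally show ?thesis
    unfolding L_iff .
qed

lemma L_mult: "x \<in> L k \<Longrightarrow> y \<in> L l \<Longrightarrow> x * y \<in> L (k + l)"
proof -
  assume x: "x \<in> L k" and y: "y \<in> L l"
  have "kK (x * y) = emb (cq (q powr (real_of_int k / 2))) * x * (emb (cq (q powr (real_of_int l / 2))) * y)"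
    using x y by (simp add: L_iff kK_mult)
  also have "\<dots> = emb (cq (q powr (real_of_int k / 2)) * cq (q powr (real_of_int l / 2))) * (x * y)"
    by (simp add: emb_mult mult.assoc emb_left_commute[of _ x])
  also have "cq (q powr (real_of_int k / 2)) * cq (q powr (real_of_int l / 2)) = cq (q powr (real_of_int (k + l) / 2))"
    by (simp add: powr_add add_divide_distrib)
  finally show ?thesis by (simp add: L_iff)
qed

lemma L_mult': "x \<in> L k \<Longrightarrow> y \<in> L l \<Longrightarrow> k + l = m \<Longrightarrow> x * y \<in> L m"
  using L_mult by blast

lemma L_0_iff: "f \<in> L 0 \<longleftrightarrow> kK f = f"
  using q_pos by (simp add: L_iff emb_1)

lemma L_1: "1 \<in> L 0"
  by (simp add: L_0_iff kK_1)

lemma L_generators: "a \<in> L (-1)" "c \<in> L (-1)" "st a \<in> L 1" "st c \<in> L 1"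
  by (simp_all add: L_iff kK_a kK_c kK_sa kK_sc)

lemma emb_mult_cancel: "emb z * x = emb z' * x \<Longrightarrow> z \<noteq> z' \<Longrightarrow> x = 0"
proof -
  assume eq: "emb z * x = emb z' * x" and ne: "z \<noteq> z'"
  have "emb (z - z') = emb z - emb z'"
    using emb_add[of "z - z'" z'] by simp
  then have "emb (z - z') * x = 0"
    using eq by (simp add: left_diff_distrib)
  then have "emb (1 / (z - z')) * (emb (z - z') * x) = 0"
    by simp
  then show "x = 0"
    using ne by (simp add: mult.assoc [symmetric] emb_mult [symmetric] emb_1)
qed

lemma L_degree_unique: "x \<in> L k \<Longrightarrow> x \<in> L l \<Longrightarrow> x \<noteq> 0 \<Longrightarrow> k = l"
proof -
  assume "x \<in> L k" "x \<in> L l" "x \<noteq> 0"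
  then have "emb (cq (q powr (real_of_int k / 2))) * x = emb (cq (q powr (real_of_int l / 2))) * x"
    by (simp add: L_iff)
  then have "cq (q powr (real_of_int k / 2)) = cq (q powr (real_of_int l / 2))"
    using emb_mult_cancel \<open>x \<noteq> 0\<close> by blast
  then have "real_of_int k / 2 = real_of_int l / 2"
    using powr_inj[of q] q_pos q_less_1 by simp
  then show "k = l" by simp
qed

lemma kK_L: "x \<in> L k \<Longrightarrow> kK x \<in> L k"
  using L_emb by (simp add: L_iff[of x])

lemma kF_L: "x \<in> L k \<Longrightarrow> kF x \<in> L (k - 2)"
proof -
  assume "x \<in> L k"
  then have "kK (kF x) = emb (cq (1 / q)) * kF (emb (cq (q powr (real_of_int k / 2))) * x)"
    unfolding L_iff kK_kF by simp
  also have "\<dots> = emb (cq (1 / q) * cq (q powr (real_of_int k / 2))) * kF x"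
    by (simp only: kF_emb emb_mult mult.assoc)
  also have "cq (1 / q) * cq (q powr (real_of_int k / 2)) = cq (q powr (real_of_int (k - 2) / 2))"
  proof -
    have "real_of_int (k - 2) / 2 = real_of_int k / 2 + (- 1)"
      by simp
    then have "q powr (real_of_int (k - 2) / 2) = q powr (real_of_int k / 2) * inverse q"
      using q_pos by (simp only: powr_add powr_minus powr_one less_imp_le)
    then show ?thesis
      by (simp add: inverse_eq_divide)
  qed
  finally show ?thesis
    unfolding L_iff .
qed

lemma Xminus_L: "x \<in> L k \<Longrightarrow> Xminus q emb kK kF x \<in> L (k - 2)"
  unfolding Xminus_def by (intro L_emb kF_L kK_L)

lemma Xminus_mult_L_0:
  assumes f: "f \<in> L 0"
  shows "Xminus q emb kK kF (x * f) = Xminus q emb kK kF x * f + x * Xminus q emb kK kF f"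
proof -
  have "kF (kK (x * f)) = kF (kK x) * f + x * kF f"
    by (simp add: kK_mult L_0_iff[THEN iffD1, OF f] kF_mult kKi_kK)
  then show ?thesis
    unfolding Xminus_def L_0_iff[THEN iffD1, OF f]
    by (simp add: distrib_left mult.assoc emb_left_commute[of _ x])
qed

lemma one_in_L_neg_L_list:
  "\<exists>ps. (\<forall>p\<in>set ps. fst p \<in> L (- n) \<and> snd p \<in> L n) \<and> sum_list (map (\<lambda>p. fst p * snd p) ps) = 1"
proof (induction n rule: int_induct[where k = 0])
  case base
  show ?case by (rule exI[of _ "[(1, 1)]"]) (simp add: L_1)
next
  case (step1 i)
  then obtain ps where ps: "\<forall>p\<in>set ps. fst p \<in> L (- i) \<and> snd p \<in> L i"
    "sum_list (map (\<lambda>p. fst p * snd p) ps) = 1" by blast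
  define e where "e = emb (cq (q^2)) * c"
  have e: "e \<in> L (-1)" unfolding e_def by (intro L_emb L_generators)
  let ?h = "\<lambda>p. [(fst p * a, st a * snd p), (fst p * e, st c * snd p)]"
  have "x * a * (st a * y) + x * e * (st c * y) = x * y" for x y
  proof -
    have "x * a * (st a * y) + x * e * (st c * y) = x * (a * st a + e * st c) * y"
      by (simp add: distrib_left distrib_right mult.assoc)
    then show ?thesis using a_sa_c_sc by (simp add: e_def mult.assoc)
  qed
  then have "sum_list (map (\<lambda>p. fst p * snd p) (concat (map ?h ps))) = 1"
    using ps(2) by (simp add: sum_list_concat_map)
  moreover have "\<forall>p\<in>set (concat (map ?h ps)). fst p \<in> L (- (i + 1)) \<and> snd p \<in> L (i + 1)"
    using ps(1) e L_generators by (auto intro: L_mult')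
  ultimately show ?case by blast
next
  case (step2 i)
  then obtain ps where ps: "\<forall>p\<in>set ps. fst p \<in> L (- i) \<and> snd p \<in> L i"
    "sum_list (map (\<lambda>p. fst p * snd p) ps) = 1" by blast
  let ?h = "\<lambda>p. [(fst p * st a, a * snd p), (fst p * st c, c * snd p)]"
  have "x * st a * (a * y) + x * st c * (c * y) = x * y" for x y
  proof -
    have "x * st a * (a * y) + x * st c * (c * y) = x * (st a * a + st c * c) * y"
      by (simp add: distrib_left distrib_right mult.assoc)
    then show ?thesis using sa_a_sc_c by simp
  qed
  then have "sum_list (map (\<lambda>p. fst p * snd p) (concat (map ?h ps))) = 1"
    using ps(2) by (simp add: sum_list_concat_map)
  moreover have "\<forall>p\<in>set (concat (map ?h ps)). fst p \<in> L (- (i - 1)) \<and> snd p \<in> L (i - 1)"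
    using ps(1) L_generators by (auto intro: L_mult')
  ultimately show ?case by blast
qed

lemma one_in_L_neg_L:
  obtains k :: nat and w v where "\<And>j. j < k \<Longrightarrow> w j \<in> L (- n)" "\<And>j. j < k \<Longrightarrow> v j \<in> L n"
    and "(\<Sum>j<k. w j * v j) = 1"
proof -
  obtain ps where ps: "\<forall>p\<in>set ps. fst p \<in> L (- n) \<and> snd p \<in> L n"
    "sum_list (map (\<lambda>p. fst p * snd p) ps) = 1"
    using one_in_L_neg_L_list by blast
  show ?thesis
  proof
    show "fst (ps ! j) \<in> L (- n)" "snd (ps ! j) \<in> L n" if "j < length ps" for j
      using ps(1) that by auto
    show "(\<Sum>j<length ps. fst (ps ! j) * snd (ps ! j)) = 1"
      using ps(2) by (simp add: sum_list_sum_nth atLeast0LessThan)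
  qed
qed

lemma om_rmul_homogeneous:
  assumes "x \<in> L k"
  shows "om_rmul q emb kK w x =
    (emb (cq (q powr real_of_int k)) * fst w * x,
     emb (cq (q powr real_of_int k)) * fst (snd w) * x,
     emb (cq (q powr real_of_int (2 * k))) * snd (snd w) * x)"
proof (cases "x = 0")
  case True
  then show ?thesis by (simp add: om_rmul_def)
next
  case False
  have "x \<in> L (SOME k. x \<in> L k)"
    using assms by (rule someI)
  then have "(SOME k. x \<in> L k) = k"
    using L_degree_unique assms False by blast
  then show ?thesis by (simp add: om_rmul_def)
qed

lemma om_rmul_L_0: "b \<in> L 0 \<Longrightarrow> om_rmul q emb kK w b = (fst w * b, fst (snd w) * b, snd (snd w) * b)"
  using q_pos by (simp add: om_rmul_homogeneous emb_1)

lemma om_rmul_minus: "y \<in> L k \<Longrightarrow> om_rmul q emb kK (0, x, 0) y = (0, emb (cq (q powr real_of_int k)) * x * y, 0)"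
  by (simp add: om_rmul_homogeneous)

lemma om_rmul_mult:
  assumes "x \<in> L k" and "y \<in> L l"
  shows "om_rmul q emb kK w (x * y) = om_rmul q emb kK (om_rmul q emb kK w x) y"
proof -
  have "emb (cq (q powr real_of_int (k + l))) = emb (cq (q powr real_of_int k)) * emb (cq (q powr real_of_int l))"
    "emb (cq (q powr real_of_int (2 * (k + l)))) = emb (cq (q powr real_of_int (2 * k))) * emb (cq (q powr real_of_int (2 * l)))"
    by (simp_all only: distrib_left of_int_add powr_add of_real_mult emb_mult)
  then show ?thesis
    using assms L_mult[OF assms]
    by (simp add: om_rmul_homogeneous mult.assoc emb_left_commute[of _ "fst w"]
        emb_left_commute[of _ "fst (snd w)"] emb_left_commute[of _ "snd (snd w)"]
        emb_left_commute[of _ "_ * x"] emb_left_commute[of _ "emb _"])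
qed


lemma Om01_iff: "w \<in> Om01 q emb kK \<longleftrightarrow> (\<exists>x\<in>L (-2). w = (0, x, 0))"
  by (auto simp: Om01_def)

lemma Om01_zero: "0 \<in> Om01 q emb kK"
  by (auto simp: Om01_iff zero_prod_def intro: L_zero)

lemma Om01_add: "w \<in> Om01 q emb kK \<Longrightarrow> w' \<in> Om01 q emb kK \<Longrightarrow> w + w' \<in> Om01 q emb kK"
  by (auto simp: Om01_iff intro: L_add)

lemma Om01_uminus: "w \<in> Om01 q emb kK \<Longrightarrow> - w \<in> Om01 q emb kK"
  by (auto simp: Om01_iff intro: L_uminus)

lemma balanced_om_rmul: "balanced_map (Om01 q emb kK) (om_rmul q emb kK) (L n) (*) (L 0) (om_rmul q emb kK)"
proof -
  have "om_rmul q emb kK (w + w') y = om_rmul q emb kK w y + om_rmul q emb kK w' y" if "y \<in> L n" for w w' y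
    using that by (simp add: om_rmul_homogeneous distrib_left distrib_right)
  moreover have "om_rmul q emb kK w (y + y') = om_rmul q emb kK w y + om_rmul q emb kK w y'"
    if "y \<in> L n" "y' \<in> L n" for w y y'
    using that L_add[OF that] by (simp add: om_rmul_homogeneous distrib_left)
  moreover have "om_rmul q emb kK (om_rmul q emb kK w b) y = om_rmul q emb kK w (b * y)"
    if "b \<in> L 0" "y \<in> L n" for w b y
    using om_rmul_mult[OF that] by simp
  ultimately show ?thesis
    unfolding balanced_map_def by blast
qed

end

section \<open>Bijectivity of the multiplication map \<open>\<mu>\<^sub>2\<close>\<close>

text \<open>A finitely supported \<open>u\<close> on \<open>\<Omega>\<^sup>0\<^sup>1 \<times> L(n)\<close> stands for \<open>\<Sum> u\<^sub>r (x\<^sub>r \<omega>\<^sub>-) \<otimes> y\<^sub>r\<close>;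
  \<open>minus_coeff u\<close> is \<open>\<Sum> u\<^sub>r x\<^sub>r y\<^sub>r\<close>, and \<open>minus_tensor k w v z\<close> stands for \<open>\<Sum>\<^sub>j (z w\<^sub>j \<omega>\<^sub>-) \<otimes> v\<^sub>j\<close>.\<close>

definition minus_coeff :: "('a::ring_1 omega1 \<times> 'a \<Rightarrow> int) \<Rightarrow> 'a" where
  "minus_coeff u = (\<Sum>r\<in>{p. u p \<noteq> 0}. of_int (u r) * (fst (snd (fst r)) * snd r))"

definition minus_tensor :: "nat \<Rightarrow> (nat \<Rightarrow> 'a::ring_1) \<Rightarrow> (nat \<Rightarrow> 'a) \<Rightarrow> 'a \<Rightarrow> ('a omega1 \<times> 'a \<Rightarrow> int)" where
  "minus_tensor k w v z = (\<lambda>p. \<Sum>j<k. dl ((0::'a), z * w j, (0::'a)) (v j) p)"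

lemma sum_minus_triple: "(\<Sum>p\<in>S. ((0::'a::ring_1), f p, (0::'a))) = (0, \<Sum>p\<in>S. f p, 0)"
  by (simp add: prod_eq_iff fst_sum snd_sum)

context suq2
begin

abbreviation T :: "int \<Rightarrow> ('a omega1 \<times> 'a \<Rightarrow> int) set set" where
  "T n \<equiv> tensOL q emb kK n"

abbreviation tequiv_T :: "int \<Rightarrow> ('a omega1 \<times> 'a \<Rightarrow> int) \<Rightarrow> ('a omega1 \<times> 'a \<Rightarrow> int) \<Rightarrow> bool" where
  "tequiv_T n \<equiv> tequiv (Om01 q emb kK) (om_rmul q emb kK) (L n) (*) (L 0)"

lemma fsums_Om01_memD:
  "u \<in> fsums (Om01 q emb kK) (L n) \<Longrightarrow> u r \<noteq> 0 \<Longrightarrow> \<exists>x\<in>L (-2). fst r = (0, x, 0) \<and> snd r \<in> L n"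
  by (auto simp: fsums_def Om01_iff mem_Times_iff)

lemma lin_ext_om_rmul:
  assumes u: "u \<in> fsums (Om01 q emb kK) (L n)"
  shows "lin_ext (om_rmul q emb kK) u = (0, emb (cq (q powr real_of_int n)) * minus_coeff u, 0)"
proof -
  have "lin_ext (om_rmul q emb kK) u =
      (\<Sum>p\<in>{p. u p \<noteq> 0}. (0, emb (cq (q powr real_of_int n)) * (of_int (u p) * (fst (snd (fst p)) * snd p)), 0))"
    unfolding lin_ext_def
  proof (rule sum.cong[OF refl])
    fix p assume "p \<in> {p. u p \<noteq> 0}"
    then obtain x where "fst p = (0, x, 0)" "snd p \<in> L n"
      using fsums_Om01_memD[OF u] by blast
    then show "zsm (u p) (om_rmul q emb kK (fst p) (snd p)) =
        (0, emb (cq (q powr real_of_int n)) * (of_int (u p) * (fst (snd (fst p)) * snd p)), 0)"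
      by (simp add: om_rmul_minus zsm_triple mult_of_int_commute mult.assoc)
  qed
  then show ?thesis
    by (simp add: sum_minus_triple minus_coeff_def sum_distrib_left)
qed

lemma mu2_eq_minus_coeff: "C \<in> T n \<Longrightarrow> mu2 q emb kK C = (0, emb (cq (q powr real_of_int n)) * minus_coeff (trep C), 0)"
  by (simp add: mu2_def tlin_eq_lin_ext lin_ext_om_rmul tensor_trep(1))


lemma tequiv_minus_tensor:
  assumes u: "u \<in> fsums (Om01 q emb kK) (L n)"
    and w: "\<And>j. j < k \<Longrightarrow> w j \<in> L (- n)" and v: "\<And>j. j < k \<Longrightarrow> v j \<in> L n"
    and one: "(\<Sum>j<k. w j * v j) = 1"
  shows "tequiv_T n u (minus_tensor k w v (minus_coeff u))"
proof -
  let ?S = "{p. u p \<noteq> 0}"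
  have fin: "finite ?S" using u by (simp add: fsums_def)
  define m where "m r j = ((0::'a), fst (snd (fst r)) * (snd r * w j), (0::'a))"
    for r :: "'a omega1 \<times> 'a" and j
  have m: "m r j \<in> Om01 q emb kK" if r: "r \<in> ?S" and j: "j < k" for r j
  proof -
    obtain x where "x \<in> L (-2)" "fst r = (0, x, 0)" "snd r \<in> L n"
      using fsums_Om01_memD[OF u, of r] r by auto
    moreover have "snd r * w j \<in> L 0"
      using L_mult' \<open>snd r \<in> L n\<close> w[OF j] by simp
    ultimately show ?thesis
      unfolding m_def Om01_iff by (auto intro: L_mult')
  qed
  have expand: "tequiv_T n (dl (fst r) (snd r)) (\<lambda>p. \<Sum>j<k. dl (m r j) (v j) p)" if r: "r \<in> ?S" for r
  proof -
    obtain x where x: "fst r = (0, x, 0)" "fst r \<in> Om01 q emb kK" and y: "snd r \<in> L n"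
      using fsums_Om01_memD[OF u, of r] r by (auto simp: Om01_iff)
    have yw: "snd r * w j \<in> L 0" if "j < k" for j
      using L_mult'[OF y w[OF that]] by simp
    have "snd r = (\<Sum>j<k. snd r * w j * v j)"
      by (simp add: mult.assoc sum_distrib_left [symmetric] one)
    then have "dl (fst r) (snd r) = dl (fst r) (\<Sum>j<k. snd r * w j * v j)"
      by (rule arg_cong)
    then have "tequiv_T n (dl (fst r) (snd r)) (dl (fst r) (\<Sum>j<k. snd r * w j * v j))"
      by (rule tequiv_eqI)
    also have "tequiv_T n \<dots> (\<lambda>p. \<Sum>j<k. dl (fst r) (snd r * w j * v j) p)"
    proof (rule tequiv_dl_sum_right)
      show "snd r * w j * v j \<in> L n" if "j \<in> {..<k}" for j
        using L_mult'[OF yw v] that by simp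
    qed (simp_all add: x(2) L_zero L_add)
    also have "tequiv_T n \<dots> (\<lambda>p. \<Sum>j<k. dl (m r j) (v j) p)"
    proof (rule tequiv_sum)
      fix j assume "j \<in> {..<k}"
      then have j: "j < k" by simp
      have "tequiv_T n (dl (om_rmul q emb kK (fst r) (snd r * w j)) (v j)) (dl (fst r) (snd r * w j * v j))"
        by (rule tequiv_dl_balanced[OF x(2) v[OF j] yw[OF j]])
      moreover have "om_rmul q emb kK (fst r) (snd r * w j) = m r j"
        using yw[OF j] by (simp add: om_rmul_L_0 x(1) m_def)
      ultimately show "tequiv_T n (dl (fst r) (snd r * w j * v j)) (dl (m r j) (v j))"
        by (metis tequiv_sym)
    qed simp
    finally show ?thesis .
  qed
  have "tequiv_T n u (\<lambda>p. \<Sum>r\<in>?S. u r * dl (fst r) (snd r) p)"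
    by (rule tequiv_eqI[OF fs_decompose[OF fin]])
  also have "tequiv_T n \<dots> (\<lambda>p. \<Sum>r\<in>?S. u r * (\<Sum>j<k. dl (m r j) (v j) p))"
    using fin expand by (intro tequiv_sum tequiv_scale) auto
  also have "tequiv_T n \<dots> (\<lambda>p. \<Sum>j<k. \<Sum>r\<in>?S. u r * dl (m r j) (v j) p)"
    by (rule tequiv_eqI) (simp add: sum_distrib_left sum.swap[of _ ?S])
  also have "tequiv_T n \<dots> (\<lambda>p. \<Sum>j<k. dl (\<Sum>r\<in>?S. zsm (u r) (m r j)) (v j) p)"
  proof (rule tequiv_sum)
    fix j assume j: "j \<in> {..<k}"
    have "tequiv_T n (\<lambda>p. \<Sum>r\<in>?S. u r * dl (m r j) (v j) p) (\<lambda>p. \<Sum>r\<in>?S. dl (zsm (u r) (m r j)) (v j) p)"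
      using fin m j v Om01_zero Om01_add Om01_uminus
      by (intro tequiv_sum tequiv_sym[OF tequiv_dl_zsm_left]) auto
    also have "tequiv_T n \<dots> (dl (\<Sum>r\<in>?S. zsm (u r) (m r j)) (v j))"
      using fin m j v Om01_zero Om01_add Om01_uminus
      by (intro tequiv_sym[OF tequiv_dl_sum_left] zsm_in_subgroup) auto
    finally show "tequiv_T n (\<lambda>p. \<Sum>r\<in>?S. u r * dl (m r j) (v j) p) (dl (\<Sum>r\<in>?S. zsm (u r) (m r j)) (v j))" .
  qed simp
  also have "tequiv_T n \<dots> (minus_tensor k w v (minus_coeff u))"
    by (rule tequiv_eqI) (simp add: minus_tensor_def m_def zsm_triple sum_minus_triple minus_coeff_def
        sum_distrib_right mult.assoc)
  finally show ?thesis .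
qed


lemma mu2_inj:
  assumes C: "C \<in> T n" and D: "D \<in> T n" and eq: "mu2 q emb kK C = mu2 q emb kK D"
  shows "C = D"
proof -
  let ?e = "\<lambda>r. emb (cq (q powr r))"
  have "?e (- real_of_int n) * (?e (real_of_int n) * minus_coeff (trep C)) =
      ?e (- real_of_int n) * (?e (real_of_int n) * minus_coeff (trep D))"
    using eq by (simp add: mu2_eq_minus_coeff[OF C] mu2_eq_minus_coeff[OF D])
  then have coeff: "minus_coeff (trep C) = minus_coeff (trep D)"
    using emb_powr_inverse[of "- real_of_int n"] by (simp add: mult.assoc [symmetric])
  obtain k :: nat and w v where w: "\<And>j. j < k \<Longrightarrow> w j \<in> L (- n)" and v: "\<And>j. j < k \<Longrightarrow> v j \<in> L n"
    and one: "(\<Sum>j<k. w j * v j) = 1"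
    using one_in_L_neg_L[of n] by blast
  have "tequiv_T n (trep C) (minus_tensor k w v (minus_coeff (trep C)))"
    and "tequiv_T n (trep D) (minus_tensor k w v (minus_coeff (trep D)))"
    using tequiv_minus_tensor[OF tensor_trep(1) w v one] C D by blast+
  then have "tequiv_T n (trep C) (trep D)"
    unfolding coeff by (blast intro: tequiv_trans tequiv_sym)
  then show "C = D"
    using C D tensor_eqI by blast
qed

lemma mu2_surj:
  assumes z: "z \<in> L (n - 2)"
  shows "\<exists>D\<in>T n. mu2 q emb kK D = (0, z, 0)"
proof -
  define z' where "z' = emb (cq (q powr (- real_of_int n))) * z"
  have z': "z' \<in> L (n - 2)" unfolding z'_def using z by (rule L_emb)
  obtain k :: nat and w v where w: "\<And>j. j < k \<Longrightarrow> w j \<in> L (- n)" and v: "\<And>j. j < k \<Longrightarrow> v j \<in> L n"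
    and one: "(\<Sum>j<k. w j * v j) = 1"
    using one_in_L_neg_L[of n] by blast
  let ?U = "minus_tensor k w v z'"
  have mem: "((0, z' * w j, 0), v j) \<in> Om01 q emb kK \<times> L n" if "j < k" for j
    using L_mult'[OF z' w[OF that]] v[OF that] by (auto simp: Om01_iff)
  have "finite {p. ?U p \<noteq> 0}"
    unfolding minus_tensor_def by (rule finite_support_sum) simp_all
  moreover have "{p. ?U p \<noteq> 0} \<subseteq> Om01 q emb kK \<times> L n"
  proof
    fix p assume "p \<in> {p. ?U p \<noteq> 0}"
    then obtain j where "j < k" "dl (0, z' * w j, 0) (v j) p \<noteq> 0"
      unfolding minus_tensor_def by (auto elim: sum.not_neutral_contains_not_neutral)
    then show "p \<in> Om01 q emb kK \<times> L n"
      using mem by (auto simp: dl_def split: if_splits)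
  qed
  ultimately have U: "?U \<in> fsums (Om01 q emb kK) (L n)"
    by (simp add: fsums_def)
  have "mu2 q emb kK (tcls (Om01 q emb kK) (om_rmul q emb kK) (L n) (*) (L 0) ?U) = lin_ext (om_rmul q emb kK) ?U"
    unfolding mu2_def using balanced_om_rmul U by (rule tlin_tcls)
  also have "\<dots> = (\<Sum>j<k. lin_ext (om_rmul q emb kK) (dl (0, z' * w j, 0) (v j)))"
    unfolding minus_tensor_def by (rule lin_ext_sum) simp_all
  also have "\<dots> = (\<Sum>j<k. (0, emb (cq (q powr real_of_int n)) * (z' * w j) * v j, 0))"
    using v by (intro sum.cong) (auto simp: om_rmul_minus)
  also have "\<dots> = (0, emb (cq (q powr real_of_int n)) * z' * (\<Sum>j<k. w j * v j), 0)"
    by (simp add: sum_minus_triple sum_distrib_left mult.assoc)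
  also have "\<dots> = (0, z, 0)"
    using emb_powr_inverse[of "real_of_int n"] by (simp add: one z'_def mult.assoc [symmetric])
  finally show ?thesis
    using U unfolding tensor_def by blast
qed

lemma ex1_mu2_preimage: "z \<in> L (n - 2) \<Longrightarrow> \<exists>!D. D \<in> T n \<and> mu2 q emb kK D = (0, z, 0)"
  using mu2_surj mu2_inj by metis


section \<open>The twisted Leibniz rule\<close>

lemma mu2_tadd:
  "C \<in> T n \<Longrightarrow> D \<in> T n \<Longrightarrow>
   mu2 q emb kK (tadd (Om01 q emb kK) (om_rmul q emb kK) (L n) (*) (L 0) C D) = mu2 q emb kK C + mu2 q emb kK D"
  unfolding mu2_def by (rule tlin_tadd[OF balanced_om_rmul])

lemma tract_right_T:
  assumes C: "C \<in> T n" and f: "f \<in> L 0"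
  shows "tract_right (Om01 q emb kK) (om_rmul q emb kK) (L n) (*) (L 0) C (\<lambda>x. x * f) \<in> T n"
    and "mu2 q emb kK (tract_right (Om01 q emb kK) (om_rmul q emb kK) (L n) (*) (L 0) C (\<lambda>x. x * f)) =
      om_rmul q emb kK (mu2 q emb kK C) f"
proof -
  have g: "x * f \<in> L n" if "x \<in> L n" for x
    using L_mult'[OF that f] by simp
  then show "tract_right (Om01 q emb kK) (om_rmul q emb kK) (L n) (*) (L 0) C (\<lambda>x. x * f) \<in> T n"
    using C by (intro tract_right_in_tensor)
  have "Modules.additive (\<lambda>w. om_rmul q emb kK w f)"
    using f by (simp add: Modules.additive_def om_rmul_L_0 distrib_right)
  moreover have "om_rmul q emb kK w (x * f) = om_rmul q emb kK (om_rmul q emb kK w x) f" if "x \<in> L n" for w x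
    using om_rmul_mult[OF that f] .
  ultimately show "mu2 q emb kK (tract_right (Om01 q emb kK) (om_rmul q emb kK) (L n) (*) (L 0) C (\<lambda>x. x * f)) =
      om_rmul q emb kK (mu2 q emb kK C) f"
    unfolding mu2_def using balanced_om_rmul C g by (intro tlin_tract_right)
qed

lemma nablabar_T:
  assumes "\<phi> \<in> L n"
  shows "nablabar q emb kK kF n \<phi> \<in> T n"
    and "mu2 q emb kK (nablabar q emb kK kF n \<phi>) = (0, Xminus q emb kK kF \<phi>, 0)"
  using theI'[OF ex1_mu2_preimage[OF Xminus_L[OF assms]]] by (simp_all add: nablabar_def)

lemma Phi_dbar_T:
  assumes \<eta>: "\<eta> \<in> L n" and f: "f \<in> L 0"
  shows "Phi q emb kK n (ptens (L n) (*) (Om01 q emb kK) om_lmul (L 0) \<eta> (dbar q emb kK kF f)) \<in> T n"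
    and "mu2 q emb kK (Phi q emb kK n (ptens (L n) (*) (Om01 q emb kK) om_lmul (L 0) \<eta> (dbar q emb kK kF f))) =
      (0, \<eta> * Xminus q emb kK kF f, 0)"
proof -
  have Xf: "Xminus q emb kK kF f \<in> L (-2)"
    using Xminus_L[OF f] by simp
  then have "mu1 (ptens (L n) (*) (Om01 q emb kK) om_lmul (L 0) \<eta> (dbar q emb kK kF f)) = (0, \<eta> * Xminus q emb kK kF f, 0)"
    unfolding mu1_def dbar_def om_lmul_omega_minus
    using \<eta> by (subst tlin_ptens[OF balanced_om_lmul]) (auto simp: Om01_iff om_lmul_def)
  moreover have "\<eta> * Xminus q emb kK kF f \<in> L (n - 2)"
    using L_mult'[OF \<eta> Xf] by simp
  ultimately show "Phi q emb kK n (ptens (L n) (*) (Om01 q emb kK) om_lmul (L 0) \<eta> (dbar q emb kK kF f)) \<in> T n"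
    and "mu2 q emb kK (Phi q emb kK n (ptens (L n) (*) (Om01 q emb kK) om_lmul (L 0) \<eta> (dbar q emb kK kF f))) =
      (0, \<eta> * Xminus q emb kK kF f, 0)"
    using theI'[OF ex1_mu2_preimage] unfolding Phi_def by simp_all
qed

end

lemma suq2I: "SUq2_setting q emb st a c kK kKi kE kF \<Longrightarrow> suq2 q emb st a c kK kKi kF"
  unfolding SUq2_setting_def complex_alg_def clin_def suq2_def
  by (elim conjE) (intro conjI; assumption)

theorem proposition3p7:
  fixes q :: real and emb :: "complex \<Rightarrow> 'a::ring_1" and st :: "'a \<Rightarrow> 'a"
    and a c :: 'a and kK kKi kE kF :: "'a \<Rightarrow> 'a" and n :: int and eta f :: 'a
  assumes "SUq2_setting q emb st a c kK kKi kE kF"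
    and "eta \<in> Lsp q emb kK n"
    and "f \<in> Bsp q emb kK"
  shows "nablabar q emb kK kF n (eta * f) =
     tadd (Om01 q emb kK) (om_rmul q emb kK) (Lsp q emb kK n) (*) (Bsp q emb kK)
       (tract_right (Om01 q emb kK) (om_rmul q emb kK) (Lsp q emb kK n) (*) (Bsp q emb kK)
          (nablabar q emb kK kF n eta) (\<lambda>x. x * f))
       (Phi q emb kK n
          (ptens (Lsp q emb kK n) (*) (Om01 q emb kK) om_lmul (Bsp q emb kK) eta (dbar q emb kK kF f)))"
proof -
  interpret suq2 q emb st a c kK kKi kF
    using assms(1) by (rule suq2I)
  let ?X = "Xminus q emb kK kF" and ?N = "nablabar q emb kK kF n eta"
  let ?TR = "tract_right (Om01 q emb kK) (om_rmul q emb kK) (L n) (*) (L 0) ?N (\<lambda>x. x * f)"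
  let ?P = "Phi q emb kK n (ptens (L n) (*) (Om01 q emb kK) om_lmul (L 0) eta (dbar q emb kK kF f))"
  let ?R = "tadd (Om01 q emb kK) (om_rmul q emb kK) (L n) (*) (L 0) ?TR ?P"
  have TR: "?TR \<in> T n" "mu2 q emb kK ?TR = (0, ?X eta * f, 0)"
    using tract_right_T[OF nablabar_T(1)[OF assms(2)] assms(3)] nablabar_T(2)[OF assms(2)] assms(3)
    by (simp_all add: om_rmul_L_0)
  note P = Phi_dbar_T[OF assms(2,3)]
  have R: "?R \<in> T n"
    using TR(1) P(1) by (rule tadd_in_tensor)
  have "mu2 q emb kK ?R = (0, ?X (eta * f), 0)"
    using mu2_tadd[OF TR(1) P(1)] TR(2) P(2) by (simp add: Xminus_mult_L_0[OF assms(3)])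
  moreover have "eta * f \<in> L n"
    using L_mult'[OF assms(2,3)] by simp
  ultimately show ?thesis
    using mu2_inj[OF nablabar_T(1) R] nablabar_T(2) by metis
qed

end
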